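(* Let $G$ be a plane embedded graph whose external boundary is a simple cycle, and let $f$ be a convex combination map of $G$ which is an embedding. Then every bounded face of the straight-edge embedding determined by $f$ is convex.
   Context: Vertices on the external boundary cycle $C$ are external, others internal. A convex combination map of $G$ is a map $f$ from vertices to $\mathbb{R}^2$ such that the external vertices are mapped bijectively, in cyclic order along $C$, to the corners of a convex polygon $P$, and there are coefficients $\lambda_{uv}\ge0$, $\sum_v\lambda_{uv}=1$, $\lambda_{uv}>0$ iff ($u$ internal and $v$ a neighbour of $u$), with $f(u)=\sum_v\lambda_{uv}f(v)$ for every internal $u$. $f$ is an embedding if vertex images are distinct and the segments $[f(u),f(v)]$ for edges $\{u,v\}$ have pairwise disjoint relative interiors containing no vertex images. *)

theory Defs
  imports "HOL-Analysis.Analysis"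
begin

definition simple_graph :: "'a set \<Rightarrow> ('a \<times> 'a) set \<Rightarrow> bool" where
  "simple_graph V E \<longleftrightarrow> finite V \<and> E \<subseteq> V \<times> V \<and>
     (\<forall>u v. (u, v) \<in> E \<longrightarrow> (v, u) \<in> E) \<and> (\<forall>u. (u, u) \<notin> E)"

definition graph_cycle :: "'a set \<Rightarrow> ('a \<times> 'a) set \<Rightarrow> 'a list \<Rightarrow> bool" where
  "graph_cycle V E cs \<longleftrightarrow> distinct cs \<and> length cs \<ge> 3 \<and> set cs \<subseteq> V \<and>
     (\<forall>i < length cs. (cs ! i, cs ! ((i + 1) mod length cs)) \<in> E)"

definition arc_drawing :: "'a set \<Rightarrow> ('a \<times> 'a) set \<Rightarrow> ('a \<Rightarrow> complex)
    \<Rightarrow> ('a \<Rightarrow> 'a \<Rightarrow> real \<Rightarrow> complex) \<Rightarrow> complex set" where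
  "arc_drawing V E p \<gamma> = p ` V \<union> (\<Union>(u, v)\<in>E. path_image (\<gamma> u v))"

definition plane_embedding :: "'a set \<Rightarrow> ('a \<times> 'a) set \<Rightarrow> ('a \<Rightarrow> complex)
    \<Rightarrow> ('a \<Rightarrow> 'a \<Rightarrow> real \<Rightarrow> complex) \<Rightarrow> bool" where
  "plane_embedding V E p \<gamma> \<longleftrightarrow> inj_on p V \<and>
     (\<forall>(u, v)\<in>E. arc (\<gamma> u v) \<and> pathstart (\<gamma> u v) = p u \<and> pathfinish (\<gamma> u v) = p v \<and>
        path_image (\<gamma> v u) = path_image (\<gamma> u v) \<and>
        path_image (\<gamma> u v) \<inter> p ` V = {p u, p v}) \<and>
     (\<forall>(u, v)\<in>E. \<forall>(x, y)\<in>E. {u, v} \<noteq> {x, y} \<longrightarrow>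
        path_image (\<gamma> u v) \<inter> path_image (\<gamma> x y) \<subseteq> p ` ({u, v} \<inter> {x, y}))"

definition external_boundary_cycle :: "'a set \<Rightarrow> ('a \<times> 'a) set \<Rightarrow> ('a \<Rightarrow> complex)
    \<Rightarrow> ('a \<Rightarrow> 'a \<Rightarrow> real \<Rightarrow> complex) \<Rightarrow> 'a list \<Rightarrow> bool" where
  "external_boundary_cycle V E p \<gamma> cs \<longleftrightarrow> graph_cycle V E cs \<and>
     (\<forall>U\<in>components (- arc_drawing V E p \<gamma>). \<not> bounded U \<longrightarrow>
        frontier U = (\<Union>i<length cs. path_image (\<gamma> (cs ! i) (cs ! ((i + 1) mod length cs)))))"

definition cross3 :: "complex \<Rightarrow> complex \<Rightarrow> complex \<Rightarrow> real" where
  "cross3 a b c = Im (cnj (b - a) * (c - a))"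

definition convex_polygon_corners :: "(nat \<Rightarrow> complex) \<Rightarrow> nat \<Rightarrow> bool" where
  "convex_polygon_corners q n \<longleftrightarrow> n \<ge> 3 \<and>
     ((\<forall>i<n. \<forall>j<n. j \<noteq> i \<and> j \<noteq> (i + 1) mod n \<longrightarrow> cross3 (q i) (q ((i + 1) mod n)) (q j) > 0) \<or>
      (\<forall>i<n. \<forall>j<n. j \<noteq> i \<and> j \<noteq> (i + 1) mod n \<longrightarrow> cross3 (q i) (q ((i + 1) mod n)) (q j) < 0))"

definition convex_combination_map :: "'a set \<Rightarrow> ('a \<times> 'a) set \<Rightarrow> 'a list
    \<Rightarrow> ('a \<Rightarrow> complex) \<Rightarrow> bool" where
  "convex_combination_map V E cs f \<longleftrightarrow>
     convex_polygon_corners (\<lambda>i. f (cs ! i)) (length cs) \<and>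
     (\<exists>lam :: 'a \<Rightarrow> 'a \<Rightarrow> real.
        \<forall>u \<in> V - set cs.
          (\<forall>v\<in>V. lam u v \<ge> 0 \<and> (lam u v > 0 \<longleftrightarrow> (u, v) \<in> E)) \<and>
          (\<Sum>v\<in>V. lam u v) = 1 \<and>
          f u = (\<Sum>v\<in>V. lam u v *\<^sub>R f v))"

definition straight_line_embedding :: "'a set \<Rightarrow> ('a \<times> 'a) set \<Rightarrow> ('a \<Rightarrow> complex) \<Rightarrow> bool" where
  "straight_line_embedding V E f \<longleftrightarrow> inj_on f V \<and>
     (\<forall>(u, v)\<in>E. open_segment (f u) (f v) \<inter> f ` V = {}) \<and>
     (\<forall>(u, v)\<in>E. \<forall>(x, y)\<in>E. {u, v} \<noteq> {x, y} \<longrightarrow>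
        open_segment (f u) (f v) \<inter> open_segment (f x) (f y) = {})"

definition straight_drawing :: "'a set \<Rightarrow> ('a \<times> 'a) set \<Rightarrow> ('a \<Rightarrow> complex) \<Rightarrow> complex set" where
  "straight_drawing V E f = f ` V \<union> (\<Union>(u, v)\<in>E. closed_segment (f u) (f v))"

definition straight_faces :: "'a set \<Rightarrow> ('a \<times> 'a) set \<Rightarrow> ('a \<Rightarrow> complex) \<Rightarrow> complex set set" where
  "straight_faces V E f = components (- straight_drawing V E f)"

end

theory Submission
  imports Defs
begin

text \<open>
  The coordinates of \<open>f\<close>, and hence every orientation function
  \<open>v \<mapsto> cross3 a b (f v)\<close>, are harmonic for the convex-combination weights, and injectivity of
  \<open>f\<close> forces every nonempty neighbour-closed vertex set to contain a boundary vertex. This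
  yields a minimum principle, so the whole drawing lies in the polygon; a ray argument then
  puts every bounded face strictly inside it. For convexity of a bounded face \<open>F\<close> it suffices
  (\<open>F\<close> being open and connected) that whenever \<open>[x,y]\<close> leaves \<open>F\<close>, so does \<open>[x,y']\<close> for
  \<open>y'\<close> near \<open>y\<close>. Such a segment meets the drawing, and either an edge crosses it
  transversally, or a vertex on it has neighbours strictly on both sides of it (harmonicity), or
  else all vertices on it form a neighbour-closed set, which would put a polygon corner strictly
  inside the polygon. The first two situations are stable under moving \<open>y\<close>.
\<close>

lemma cross3_coord:
  "cross3 a b c = (Re b - Re a) * (Im c - Im a) - (Im b - Im a) * (Re c - Re a)"
  by (simp add: cross3_def algebra_simps)

lemma cross3_convex_comb:
  "cross3 a b ((1 - t) *\<^sub>R p + t *\<^sub>R q) = (1 - t) * cross3 a b p + t * cross3 a b q"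
  by (simp add: cross3_coord scaleR_conv_of_real algebra_simps)

lemma cross3_base [simp]: "cross3 a b a = 0" "cross3 a b b = 0"
  by (simp_all add: cross3_coord)

lemma cross3_segment:
  assumes "z \<in> closed_segment a b"
  shows "cross3 a b z = 0"
proof -
  obtain t where "z = (1 - t) *\<^sub>R a + t *\<^sub>R b"
    using assms by (auto simp: in_segment)
  then show ?thesis by (simp add: cross3_convex_comb)
qed

lemma cross3_on_line:
  assumes "cross3 c d z = 0" "c \<noteq> d"
  obtains s where "z = (1 - s) *\<^sub>R c + s *\<^sub>R d"
proof -
  define N where "N = (Re d - Re c)^2 + (Im d - Im c)^2"
  define s where "s = ((Re d - Re c) * (Re z - Re c) + (Im d - Im c) * (Im z - Im c)) / N"
  have "N \<noteq> 0"
    using assms(2) by (auto simp: N_def complex_eq_iff)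
  moreover have "(Re d - Re c) * (Im z - Im c) = (Im d - Im c) * (Re z - Re c)"
    using assms(1) by (simp add: cross3_coord)
  ultimately have "Re z - Re c = s * (Re d - Re c)" "Im z - Im c = s * (Im d - Im c)"
    by (simp_all add: s_def N_def field_simps power2_eq_square, algebra+)
  then have "z = (1 - s) *\<^sub>R c + s *\<^sub>R d"
    by (simp add: complex_eq_iff algebra_simps)
  then show ?thesis by (rule that)
qed

lemma zero_crossing_parameter:
  fixes \<alpha> \<beta> s :: real
  assumes "\<alpha> * \<beta> < 0" "\<alpha> = s * (\<alpha> - \<beta>)"
  shows "0 < s \<and> s < 1"
proof -
  have "\<alpha> - \<beta> \<noteq> 0" using assms(1) by (auto simp: mult_less_0_iff)
  then have s: "s = \<alpha> / (\<alpha> - \<beta>)" using assms(2) by (simp add: field_simps)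
  show ?thesis
    using assms(1) unfolding s
    by (cases "0 < \<alpha>") (auto simp: mult_less_0_iff field_simps)
qed

lemma cross3_common_line:
  assumes "cross3 c d a = 0" "cross3 c d b = 0" "c \<noteq> d"
  shows "cross3 a b c = 0"
proof -
  obtain sa sb where "a = (1 - sa) *\<^sub>R c + sa *\<^sub>R d" "b = (1 - sb) *\<^sub>R c + sb *\<^sub>R d"
    using cross3_on_line assms by metis
  then have "Re a = (1 - sa) * Re c + sa * Re d" "Im a = (1 - sa) * Im c + sa * Im d"
    "Re b = (1 - sb) * Re c + sb * Re d" "Im b = (1 - sb) * Im c + sb * Im d"
    by simp_all
  then show ?thesis
    unfolding cross3_coord by algebra
qed

lemma segments_cross:
  assumes weak: "cross3 c d a * cross3 c d b \<le> 0"
    and strict: "cross3 a b c * cross3 a b d < 0"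
  shows "closed_segment c d \<inter> closed_segment a b \<noteq> {}"
proof -
  define \<alpha> where "\<alpha> = cross3 c d a"
  define \<beta> where "\<beta> = cross3 c d b"
  have cd: "c \<noteq> d" using strict by auto
  have "\<alpha> \<noteq> \<beta>"
  proof
    assume "\<alpha> = \<beta>"
    with weak have "\<alpha> = 0" "\<beta> = 0"
      by (auto simp: \<alpha>_def \<beta>_def mult_le_0_iff)
    then have "cross3 a b c = 0"
      using cross3_common_line[of c d a b] cd unfolding \<alpha>_def \<beta>_def by blast
    with strict show False by simp
  qed
  define r where "r = \<alpha> / (\<alpha> - \<beta>)"
  have r: "0 \<le> r" "r \<le> 1"
    using weak \<open>\<alpha> \<noteq> \<beta>\<close> unfolding r_def \<alpha>_def[symmetric] \<beta>_def[symmetric]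
    by (cases "\<alpha> > \<beta>"; auto simp: field_simps mult_le_0_iff)+
  define z where "z = (1 - r) *\<^sub>R a + r *\<^sub>R b"
  have "cross3 c d z = (1 - r) * \<alpha> + r * \<beta>"
    unfolding z_def \<alpha>_def \<beta>_def by (rule cross3_convex_comb)
  also have "\<dots> = 0"
    using \<open>\<alpha> \<noteq> \<beta>\<close> unfolding r_def by (simp add: field_simps)
  finally obtain s where s: "z = (1 - s) *\<^sub>R c + s *\<^sub>R d"
    using cross3_on_line cd by blast
  have "0 = cross3 a b z"
    unfolding z_def using cross3_convex_comb[of a b r a b] by simp
  also have "\<dots> = (1 - s) * cross3 a b c + s * cross3 a b d"
    unfolding s by (rule cross3_convex_comb)
  finally have "cross3 a b c = s * (cross3 a b c - cross3 a b d)"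
    by (simp add: algebra_simps)
  with strict have "0 < s \<and> s < 1"
    by (rule zero_crossing_parameter)
  then have "z \<in> closed_segment c d"
    unfolding in_segment using s by (intro exI[of _ s]) auto
  moreover have "z \<in> closed_segment a b"
    using r unfolding z_def by (auto simp: in_segment)
  ultimately show ?thesis by blast
qed

lemma opposite_signs:
  fixes t K :: real
  assumes "0 < t" "t < 1" "K \<noteq> 0"
  shows "(t * K) * ((t - 1) * K) < 0"
proof -
  have "(t * K) * ((t - 1) * K) = - ((t * (1 - t)) * K\<^sup>2)"
    by (simp add: power2_eq_square algebra_simps)
  moreover have "0 < (t * (1 - t)) * K\<^sup>2"
    using assms by simp
  ultimately show ?thesis by linarith
qed

lemma cross3_through_inner_point:
  assumes "v \<in> open_segment x y" "cross3 x y w \<noteq> 0"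
  shows "cross3 v w x * cross3 v w y < 0"
proof -
  obtain t where t: "0 < t" "t < 1" "v = (1 - t) *\<^sub>R x + t *\<^sub>R y"
    using assms(1) by (auto simp: in_segment)
  have "cross3 v w x = t * cross3 x y w" "cross3 v w y = (t - 1) * cross3 x y w"
    unfolding t(3) by (simp_all add: cross3_coord algebra_simps)
  with opposite_signs[OF t(1,2) assms(2)] show ?thesis by simp
qed

lemma cross3_crossing_segment:
  assumes "w \<in> open_segment x y" "w \<in> closed_segment a b"
    and "cross3 x y a * cross3 x y b < 0"
  shows "cross3 a b x * cross3 a b y < 0"
proof -
  obtain t where t: "0 < t" "t < 1" "w = (1 - t) *\<^sub>R x + t *\<^sub>R y"
    using assms(1) by (auto simp: in_segment)
  have "0 = cross3 a b w"
    using cross3_segment[OF assms(2)] by simp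
  then have sum0: "(1 - t) * cross3 a b x + t * cross3 a b y = 0"
    by (simp add: t(3) cross3_convex_comb)
  define K where "K = cross3 a b x - cross3 a b y"
  have "K = cross3 x y b - cross3 x y a"
    by (simp add: K_def cross3_coord algebra_simps)
  then have "K \<noteq> 0" using assms(3) by auto
  have "cross3 a b x = t * K" "cross3 a b y = (t - 1) * K"
    using sum0 by (simp_all add: K_def algebra_simps)
  with opposite_signs[OF t(1,2) \<open>K \<noteq> 0\<close>] show ?thesis by simp
qed

lemma collinear_in_open_segment:
  assumes "p \<in> open_segment x y" "cross3 x y z = 0"
    and "x \<notin> closed_segment p z" "y \<notin> closed_segment p z"
  shows "z \<in> open_segment x y"
proof -
  have xy: "x \<noteq> y" using assms(1) by auto
  obtain t where t: "0 < t" "t < 1" "p = (1 - t) *\<^sub>R x + t *\<^sub>R y"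
    using assms(1) by (auto simp: in_segment)
  obtain s where s: "z = (1 - s) *\<^sub>R x + s *\<^sub>R y"
    using cross3_on_line[OF assms(2) xy] by blast
  have param: "(1 - r) *\<^sub>R p + r *\<^sub>R z = x + ((1 - r) * t + r * s) *\<^sub>R (y - x)" for r
    unfolding t(3) s by (simp add: algebra_simps)
  consider "s \<le> 0" | "1 \<le> s" | "0 < s \<and> s < 1" by linarith
  then show ?thesis
  proof cases
    case 1
    define r where "r = t / (t - s)"
    have "(1 - r) * t + r * s = 0" "0 \<le> r" "r \<le> 1"
      using 1 t unfolding r_def by (auto simp: field_simps)
    then have "x \<in> closed_segment p z"
      using param[of r] unfolding in_segment by (metis add.right_neutral scale_zero_left)
    with assms(3) show ?thesis by blast
  next
    case 2
    define r where "r = (1 - t) / (s - t)"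
    have st: "0 < s - t" using 2 t by simp
    have "r * (s - t) = 1 - t"
      using st by (simp add: r_def)
    then have "(1 - r) * t + r * s = 1"
      by (simp add: algebra_simps)
    moreover have "0 \<le> r" "r \<le> 1"
      using st 2 t(2) by (simp_all add: r_def)
    ultimately have "y \<in> closed_segment p z"
      using param[of r] unfolding in_segment by (metis add.commute diff_add_cancel scaleR_one)
    with assms(4) show ?thesis by blast
  next
    case 3
    then show ?thesis using s xy by (auto simp: in_segment)
  qed
qed

lemma segment_touching_line:
  assumes "0 \<le> cross3 x y a * cross3 x y b" "cross3 x y a \<noteq> 0"
    and "w \<in> closed_segment a b" "cross3 x y w = 0"
  shows "w = b"
proof -
  obtain r where r: "0 \<le> r" "r \<le> 1" "w = (1 - r) *\<^sub>R a + r *\<^sub>R b"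
    using assms(3) by (auto simp: in_segment)
  have sum0: "(1 - r) * cross3 x y a + r * cross3 x y b = 0"
    using assms(4) by (simp add: r(3) cross3_convex_comb)
  have "r = 1"
  proof (rule ccontr)
    assume "r \<noteq> 1"
    with r assms(2) have "0 < (1 - r) * (cross3 x y a)\<^sup>2" by simp
    moreover have "0 \<le> r * (cross3 x y a * cross3 x y b)"
      using r(1) assms(1) by simp
    moreover have "(1 - r) * (cross3 x y a)\<^sup>2 + r * (cross3 x y a * cross3 x y b) = 0"
      using arg_cong[OF sum0, of "\<lambda>u. cross3 x y a * u"]
      by (simp add: power2_eq_square algebra_simps)
    ultimately show False by linarith
  qed
  with r show ?thesis by simp
qed

lemma continuous_on_cross3 [continuous_intros]:
  "continuous_on S a \<Longrightarrow> continuous_on S b \<Longrightarrow> continuous_on S c \<Longrightarrow>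
    continuous_on S (\<lambda>z. cross3 (a z) (b z) (c z))"
  unfolding cross3_coord by (intro continuous_intros)

lemma crossing_segment_persists:
  assumes "w \<in> open_segment x y" "w \<in> closed_segment a b"
    and "cross3 x y a * cross3 x y b < 0"
  shows "\<exists>T. open T \<and> y \<in> T \<and> (\<forall>y'\<in>T. closed_segment x y' \<inter> closed_segment a b \<noteq> {})"
proof (intro exI conjI ballI)
  define T where "T = {y'. cross3 x y' a * cross3 x y' b < 0} \<inter> {y'. cross3 a b x * cross3 a b y' < 0}"
  show "open T"
    unfolding T_def by (intro open_Int open_Collect_less continuous_intros)
  show "y \<in> T"
    using assms cross3_crossing_segment[OF assms] by (simp add: T_def)
  show "closed_segment x y' \<inter> closed_segment a b \<noteq> {}" if "y' \<in> T" for y'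
    using that by (intro segments_cross) (simp_all add: T_def)
qed

lemma crossing_wedge_persists:
  assumes "p \<in> open_segment x y" "0 < cross3 x y a" "cross3 x y b < 0"
  shows "\<exists>T. open T \<and> y \<in> T \<and>
    (\<forall>y'\<in>T. closed_segment x y' \<inter> (closed_segment p a \<union> closed_segment p b) \<noteq> {})"
proof (intro exI conjI ballI)
  define T where "T = {y'. 0 < cross3 x y' a} \<inter> {y'. cross3 x y' b < 0} \<inter>
      {y'. cross3 p a x * cross3 p a y' < 0} \<inter> {y'. cross3 p b x * cross3 p b y' < 0}"
  show "open T"
    unfolding T_def by (intro open_Int open_Collect_less continuous_intros)
  show "y \<in> T"
    using assms cross3_through_inner_point[OF assms(1)] by (simp add: T_def)
  show "closed_segment x y' \<inter> (closed_segment p a \<union> closed_segment p b) \<noteq> {}" if "y' \<in> T" for y'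
  proof (cases "0 \<le> cross3 x y' p")
    case True
    with that have "closed_segment x y' \<inter> closed_segment p b \<noteq> {}"
      by (intro segments_cross) (simp_all add: T_def mult_nonneg_nonpos)
    then show ?thesis by blast
  next
    case False
    with that have "closed_segment x y' \<inter> closed_segment p a \<noteq> {}"
      by (intro segments_cross) (simp_all add: T_def mult_nonpos_nonneg)
    then show ?thesis by blast
  qed
qed

text \<open>A bounded component of the complement of \<open>D\<close> cannot contain the starting point of a
  ray that avoids \<open>D\<close>: the ray would lie in the component.\<close>

lemma bounded_component_no_ray:
  fixes D :: "'a::real_normed_vector set"
  assumes F: "F \<in> components (- D)" "bounded F" "z \<in> F"
    and "d \<noteq> 0" and ray: "\<And>t. 0 < t \<Longrightarrow> z + t *\<^sub>R d \<notin> D"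
  shows False
proof -
  define R where "R = (\<lambda>t. z + t *\<^sub>R d) ` {0..}"
  have "connected R"
    unfolding R_def by (intro connected_continuous_image continuous_intros connected_Ici)
  moreover have "R \<subseteq> - D"
    using ray in_components_subset[OF F(1)] F(3) by (force simp: R_def le_less)
  moreover have "z \<in> R"
    unfolding R_def by (rule image_eqI[of _ _ 0]) auto
  ultimately have "R \<subseteq> F"
    using F(1,3) components_maximal by blast
  then obtain B where B: "\<And>w. w \<in> R \<Longrightarrow> norm w \<le> B"
    using F(2) bounded_subset bounded_iff by metis
  define t where "t = (B + norm z + 1) / norm d"
  have "0 \<le> B + norm z" using B[OF \<open>z \<in> R\<close>] norm_ge_zero[of z] by linarith
  then have "0 \<le> t" by (simp add: t_def)
  then have "norm (z + t *\<^sub>R d) \<le> B"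
    by (intro B) (auto simp: R_def)
  moreover have "norm (t *\<^sub>R d) = B + norm z + 1"
    using \<open>0 \<le> B + norm z\<close> \<open>d \<noteq> 0\<close> by (simp add: t_def)
  moreover have "norm (t *\<^sub>R d) \<le> norm (z + t *\<^sub>R d) + norm z"
    by (metis add_diff_cancel_left' norm_triangle_ineq4 add.commute)
  ultimately show False by linarith
qed

lemma segment_in_open_perturb:
  fixes F :: "'a::real_normed_vector set"
  assumes "open F" "closed_segment x y \<subseteq> F"
  obtains e where "0 < e" "\<And>y'. y' \<in> ball y e \<Longrightarrow> closed_segment x y' \<subseteq> F"
proof -
  obtain e where e: "0 < e" "(\<Union>k\<in>closed_segment x y. ball k e) \<subseteq> F"
    using compact_subset_open_imp_ball_epsilon_subset[OF compact_segment assms(1,2)] by blast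
  have "closed_segment x y' \<subseteq> F" if y': "y' \<in> ball y e" for y'
  proof
    fix p assume "p \<in> closed_segment x y'"
    then obtain u where u: "0 \<le> u" "u \<le> 1" "p = (1 - u) *\<^sub>R x + u *\<^sub>R y'"
      by (auto simp: in_segment)
    define p0 where "p0 = (1 - u) *\<^sub>R x + u *\<^sub>R y"
    have "p0 \<in> closed_segment x y"
      unfolding p0_def using u by (auto simp: in_segment)
    moreover have "dist p0 p = u * norm (y - y')"
      unfolding p0_def u(3) dist_norm using u(1)
      by (simp add: algebra_simps flip: scaleR_diff_right)
    then have "dist p0 p < e"
      using u y' mult_left_le_one_le[of "norm (y - y')" u] by (simp add: dist_norm)
    ultimately show "p \<in> F" using e(2) by force
  qed
  with e(1) show ?thesis by (rule that)
qed

text \<open>Convexity criterion for open connected sets: it suffices that the set of points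
  visible from \<open>x\<close> inside \<open>F\<close> is relatively closed, i.e. that every invisible point of \<open>F\<close>
  has a neighbourhood of invisible points.\<close>

lemma convex_if_invisibility_open:
  fixes F :: "'a::real_normed_vector set"
  assumes "open F" "connected F"
    and invisible: "\<And>x y. x \<in> F \<Longrightarrow> y \<in> F \<Longrightarrow> \<not> closed_segment x y \<subseteq> F \<Longrightarrow>
        \<exists>T. open T \<and> y \<in> T \<and> (\<forall>y'\<in>T. \<not> closed_segment x y' \<subseteq> F)"
  shows "convex F"
  unfolding convex_contains_segment
proof (intro ballI)
  fix x y assume "x \<in> F" "y \<in> F"
  define S where "S = {y \<in> F. closed_segment x y \<subseteq> F}"
  have "openin (top_of_set F) S"
    unfolding openin_subopen[of _ S]
  proof
    fix y assume "y \<in> S"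
    then obtain e where "0 < e" "\<And>y'. y' \<in> ball y e \<Longrightarrow> closed_segment x y' \<subseteq> F"
      using segment_in_open_perturb[OF assms(1)] by (auto simp: S_def)
    then have "F \<inter> ball y e \<subseteq> S" "y \<in> F \<inter> ball y e"
      using \<open>y \<in> S\<close> by (force simp: S_def)+
    then show "\<exists>T. openin (top_of_set F) T \<and> y \<in> T \<and> T \<subseteq> S"
      by (intro exI[of _ "F \<inter> ball y e"]) (auto intro: openin_open_Int)
  qed
  moreover have "openin (top_of_set F) (F - S)"
    unfolding openin_subopen[of _ "F - S"]
  proof
    fix y assume "y \<in> F - S"
    then obtain T where "open T" "y \<in> T" "\<forall>y'\<in>T. \<not> closed_segment x y' \<subseteq> F"
      using invisible[OF \<open>x \<in> F\<close>] by (auto simp: S_def)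
    then show "\<exists>T. openin (top_of_set F) T \<and> y \<in> T \<and> T \<subseteq> F - S"
      using \<open>y \<in> F - S\<close> by (intro exI[of _ "F \<inter> T"]) (auto simp: S_def openin_open_Int)
  qed
  then have "closedin (top_of_set F) S"
    by (simp add: closedin_def S_def)
  moreover have "x \<in> S"
    using \<open>x \<in> F\<close> by (simp add: S_def)
  ultimately have "S = F"
    using assms(2) unfolding connected_clopen by blast
  with \<open>y \<in> F\<close> show "closed_segment x y \<subseteq> F"
    by (auto simp: S_def)
qed

lemma straight_drawing_closed:
  assumes "finite V" "finite E"
  shows "closed (straight_drawing V E f)"
  unfolding straight_drawing_def
  using assms by (intro closed_Un closed_Union finite_imp_closed) auto

lemma edge_in_straight_drawing:
  "(u, v) \<in> E \<Longrightarrow> closed_segment (f u) (f v) \<subseteq> straight_drawing V E f"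
  unfolding straight_drawing_def by blast

locale convex_weights =
  fixes V :: "'a set" and E :: "('a \<times> 'a) set" and C :: "'a set"
    and lam :: "'a \<Rightarrow> 'a \<Rightarrow> real"
  assumes finite_V: "finite V"
    and lam_nonneg: "\<And>u v. u \<in> V - C \<Longrightarrow> v \<in> V \<Longrightarrow> 0 \<le> lam u v"
    and lam_pos_iff: "\<And>u v. u \<in> V - C \<Longrightarrow> v \<in> V \<Longrightarrow> 0 < lam u v \<longleftrightarrow> (u, v) \<in> E"
    and lam_sum: "\<And>u. u \<in> V - C \<Longrightarrow> (\<Sum>v\<in>V. lam u v) = 1"
begin

definition harmonic :: "('a \<Rightarrow> 'b::real_vector) \<Rightarrow> bool" where
  "harmonic g \<longleftrightarrow> (\<forall>u \<in> V - C. g u = (\<Sum>v\<in>V. lam u v *\<^sub>R g v))"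

lemma harmonic_realD:
  fixes g :: "'a \<Rightarrow> real"
  shows "harmonic g \<Longrightarrow> u \<in> V - C \<Longrightarrow> g u = (\<Sum>v\<in>V. lam u v * g v)"
  by (simp add: harmonic_def)

lemma harmonic_linear: "linear l \<Longrightarrow> harmonic g \<Longrightarrow> harmonic (\<lambda>v. l (g v))"
  by (simp add: harmonic_def linear_sum linear_scale)

lemma harmonic_add_const: "harmonic g \<Longrightarrow> harmonic (\<lambda>v. g v + c)"
  by (simp add: harmonic_def scaleR_add_right sum.distrib lam_sum flip: scaleR_sum_left)

lemma harmonic_cross3:
  fixes g :: "'a \<Rightarrow> complex"
  assumes "harmonic g"
  shows "harmonic (\<lambda>v. cross3 a b (g v))"
proof -
  have "linear (\<lambda>z. Im (cnj (b - a) * z))"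
    by (intro bounded_linear.linear bounded_linear_compose[OF bounded_linear_Im]
        bounded_linear_mult_right)
  then have "harmonic (\<lambda>v. Im (cnj (b - a) * g v) + - Im (cnj (b - a) * a))"
    by (intro harmonic_add_const harmonic_linear[OF _ assms])
  then show ?thesis
    by (simp add: cross3_def algebra_simps)
qed

definition neighbour_closed :: "'a set \<Rightarrow> bool" where
  "neighbour_closed S \<longleftrightarrow> S \<subseteq> V \<and> (\<forall>u \<in> S - C. \<forall>v. (u, v) \<in> E \<longrightarrow> v \<in> S)"

lemma neighbour_closed_argmin:
  fixes g :: "'a \<Rightarrow> real"
  assumes g: "harmonic g" and S: "neighbour_closed S"
  shows "neighbour_closed {u \<in> S. \<forall>v\<in>S. g u \<le> g v}"
  unfolding neighbour_closed_def
proof (intro conjI ballI allI impI)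
  fix u v
  assume u: "u \<in> {u \<in> S. \<forall>v\<in>S. g u \<le> g v} - C" and uv: "(u, v) \<in> E"
  then have uV: "u \<in> V - C" and umin: "\<And>w. w \<in> S \<Longrightarrow> g u \<le> g w"
    using S by (auto simp: neighbour_closed_def)
  have nbrs: "w \<in> S" if "(u, w) \<in> E" for w
    using S u that by (auto simp: neighbour_closed_def)
  have terms: "0 \<le> lam u w * (g w - g u)" if "w \<in> V" for w
  proof (cases "0 < lam u w")
    case True
    then show ?thesis using lam_pos_iff[OF uV that] nbrs umin by simp
  qed (use lam_nonneg[OF uV that] in simp)
  have "(\<Sum>w\<in>V. lam u w * (g w - g u)) = (\<Sum>w\<in>V. lam u w * g w) - (\<Sum>w\<in>V. lam u w) * g u"
    by (simp add: right_diff_distrib sum_subtractf sum_distrib_right)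
  also have "\<dots> = 0"
    using harmonic_realD[OF g uV] lam_sum[OF uV] by simp
  finally have "\<forall>w\<in>V. lam u w * (g w - g u) = 0"
    using sum_nonneg_eq_0_iff[OF finite_V terms] by simp
  moreover have "v \<in> V" "0 < lam u v"
    using nbrs[OF uv] S lam_pos_iff[OF uV] uv by (auto simp: neighbour_closed_def)
  ultimately have "g v = g u" by fastforce
  then show "v \<in> {u \<in> S. \<forall>v\<in>S. g u \<le> g v}"
    using nbrs[OF uv] umin by simp
qed (use S in \<open>auto simp: neighbour_closed_def\<close>)

lemma argmin_nonempty:
  fixes g :: "'a \<Rightarrow> real"
  assumes "neighbour_closed S" "S \<noteq> {}"
  shows "{u \<in> S. \<forall>v\<in>S. g u \<le> g v} \<noteq> {}"
proof -
  have "finite S"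
    using assms(1) finite_V finite_subset by (auto simp: neighbour_closed_def)
  then have "Min (g ` S) \<in> g ` S"
    using assms(2) by simp
  then obtain m where "m \<in> S" "g m = Min (g ` S)"
    by auto
  with \<open>finite S\<close> have "m \<in> {u \<in> S. \<forall>v\<in>S. g u \<le> g v}"
    by simp
  then show ?thesis by blast
qed

text \<open>An injective harmonic placement in the plane leaves no neighbour-closed set of inner
  vertices: minimising first the real and then the imaginary part yields a vertex all of whose
  neighbours sit at the same point, contradicting injectivity.\<close>

lemma neighbour_closed_meets_boundary:
  fixes f :: "'a \<Rightarrow> complex"
  assumes f: "harmonic f" "inj_on f V" and loopfree: "\<And>u. (u, u) \<notin> E"
    and S: "neighbour_closed S" "S \<noteq> {}"
  shows "S \<inter> C \<noteq> {}"
proof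
  assume SC: "S \<inter> C = {}"
  have hRe: "harmonic (\<lambda>v. Re (f v))" and hIm: "harmonic (\<lambda>v. Im (f v))"
    using harmonic_linear[OF bounded_linear.linear f(1)] bounded_linear_Re bounded_linear_Im
    by blast+
  define M1 where "M1 = {u \<in> S. \<forall>v\<in>S. Re (f u) \<le> Re (f v)}"
  define M2 where "M2 = {u \<in> M1. \<forall>v\<in>M1. Im (f u) \<le> Im (f v)}"
  have M1: "neighbour_closed M1" "M1 \<noteq> {}"
    unfolding M1_def using neighbour_closed_argmin[OF hRe S(1)] argmin_nonempty[OF S] by auto
  have M2: "neighbour_closed M2" "M2 \<noteq> {}"
    unfolding M2_def using neighbour_closed_argmin[OF hIm M1(1)] argmin_nonempty[OF M1] by auto
  obtain u where uM2: "u \<in> M2" using M2(2) by blast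
  have M2_sub: "M2 \<subseteq> M1" "M1 \<subseteq> S"
    by (auto simp: M2_def M1_def)
  then have uV: "u \<in> V - C"
    using uM2 SC S(1) by (auto simp: neighbour_closed_def)
  have "\<exists>v\<in>V. lam u v \<noteq> 0"
  proof (rule ccontr)
    assume "\<not> (\<exists>v\<in>V. lam u v \<noteq> 0)"
    then have "(\<Sum>v\<in>V. lam u v) = 0" by simp
    with lam_sum[OF uV] show False by simp
  qed
  then obtain v where vV: "v \<in> V" and "lam u v \<noteq> 0" by blast
  with lam_nonneg[OF uV vV] have "0 < lam u v" by (simp add: order_less_le)
  then have uv: "(u, v) \<in> E" using lam_pos_iff[OF uV vV] by simp
  then have vM2: "v \<in> M2"
    using M2(1) uM2 uV by (auto simp: neighbour_closed_def)
  have "Re (f u) \<le> Re (f v)" "Re (f v) \<le> Re (f u)"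
    using uM2 vM2 M2_sub by (auto simp: M1_def)
  moreover have "Im (f u) \<le> Im (f v)" "Im (f v) \<le> Im (f u)"
    using uM2 vM2 by (auto simp: M2_def)
  ultimately have "f u = f v"
    by (simp add: complex_eq_iff)
  then have "u = v"
    using f(2) uV vV by (auto dest: inj_onD)
  with uv loopfree show False by simp
qed

lemma harmonic_min_on_boundary:
  fixes f :: "'a \<Rightarrow> complex" and g :: "'a \<Rightarrow> real"
  assumes f: "harmonic f" "inj_on f V" and loopfree: "\<And>u. (u, u) \<notin> E"
    and "E \<subseteq> V \<times> V" "V \<noteq> {}" and g: "harmonic g"
  obtains c where "c \<in> C" "c \<in> V" "\<And>v. v \<in> V \<Longrightarrow> g c \<le> g v"
proof -
  have V: "neighbour_closed V"
    using assms(4) by (auto simp: neighbour_closed_def)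
  define M where "M = {u \<in> V. \<forall>v\<in>V. g u \<le> g v}"
  have "M \<inter> C \<noteq> {}"
    unfolding M_def using neighbour_closed_meets_boundary[OF f loopfree]
      neighbour_closed_argmin[OF g V] argmin_nonempty[OF V \<open>V \<noteq> {}\<close>] by blast
  then show ?thesis using that by (auto simp: M_def)
qed

lemma harmonic_positive_neighbour:
  fixes g :: "'a \<Rightarrow> real"
  assumes g: "harmonic g" and u: "u \<in> V - C" "g u = 0"
    and v: "(u, v) \<in> E" "v \<in> V" "g v \<noteq> 0"
  shows "\<exists>w. (u, w) \<in> E \<and> 0 < g w"
proof (rule ccontr)
  assume "\<nexists>w. (u, w) \<in> E \<and> 0 < g w"
  then have terms: "0 \<le> - (lam u w * g w)" if "w \<in> V" for w
    using lam_nonneg[OF u(1) that] lam_pos_iff[OF u(1) that]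
    by (cases "0 < lam u w") (auto simp: mult_nonneg_nonpos not_less)
  have "(\<Sum>w\<in>V. - (lam u w * g w)) = 0"
    using harmonic_realD[OF g u(1)] u(2) by (simp add: sum_negf)
  then have "lam u v * g v = 0"
    using sum_nonneg_eq_0_iff[OF finite_V terms] v(2) by simp
  moreover have "0 < lam u v" using lam_pos_iff[OF u(1) v(2)] v(1) by simp
  ultimately show False using v(3) by simp
qed

lemma harmonic_neighbours_both_sides:
  fixes g :: "'a \<Rightarrow> real"
  assumes g: "harmonic g" and u: "u \<in> V - C" "g u = 0"
    and v: "(u, v) \<in> E" "v \<in> V" "g v \<noteq> 0"
  obtains w1 w2 where "(u, w1) \<in> E" "0 < g w1" "(u, w2) \<in> E" "g w2 < 0"
proof -
  have "harmonic (\<lambda>v. - g v)"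
    using harmonic_linear[OF linear_uminus g] by simp
  then have "\<exists>w. (u, w) \<in> E \<and> 0 < - g w"
    using u v by (intro harmonic_positive_neighbour) auto
  moreover have "\<exists>w. (u, w) \<in> E \<and> 0 < g w"
    using g u v by (rule harmonic_positive_neighbour)
  ultimately show ?thesis
    using that by (auto simp: neg_0_less_iff_less)
qed

end

locale convex_combination_drawing = convex_weights V E "set cs" lam
  for V :: "'a set" and E :: "('a \<times> 'a) set" and cs :: "'a list" and lam +
  fixes f :: "'a \<Rightarrow> complex"
  assumes loopfree: "\<And>u. (u, u) \<notin> E"
    and edges_in_V: "E \<subseteq> V \<times> V"
    and cycle_distinct: "distinct cs" and cycle_in_V: "set cs \<subseteq> V"
    and corners_convex: "convex_polygon_corners (\<lambda>i. f (cs ! i)) (length cs)"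
    and f_harmonic: "harmonic f"
    and f_inj: "inj_on f V"
begin

abbreviation drawing :: "complex set" where
  "drawing \<equiv> straight_drawing V E f"

definition corner :: "nat \<Rightarrow> complex" where
  "corner i = f (cs ! i)"

definition nxt :: "nat \<Rightarrow> nat" where
  "nxt i = (i + 1) mod length cs"

text \<open>\<open>orientation\<close> is \<open>1\<close> for a counter-clockwise and \<open>-1\<close> for a clockwise polygon, so that
  \<open>side i z > 0\<close> says that \<open>z\<close> lies strictly on the inner side of the polygon edge \<open>i\<close>.\<close>

definition orientation :: real where
  "orientation = (if \<forall>i<length cs. \<forall>j<length cs. j \<noteq> i \<and> j \<noteq> nxt i \<longrightarrow>
      0 < cross3 (corner i) (corner (nxt i)) (corner j) then 1 else -1)"

definition side :: "nat \<Rightarrow> complex \<Rightarrow> real" where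
  "side i z = orientation * cross3 (corner i) (corner (nxt i)) z"

lemma length_cs: "3 \<le> length cs"
  using corners_convex by (simp add: convex_polygon_corners_def)

lemma nxt_less: "i < length cs \<Longrightarrow> nxt i < length cs"
  using length_cs unfolding nxt_def by (intro mod_less_divisor) linarith

lemma nxt_neq:
  assumes "i < length cs"
  shows "nxt i \<noteq> i"
proof (cases "i + 1 < length cs")
  case False
  with assms have "i + 1 = length cs" by simp
  with length_cs show ?thesis by (simp add: nxt_def)
qed (simp add: nxt_def)

lemma orientation_square: "orientation * orientation = 1"
  by (simp add: orientation_def)

lemma side_corner_pos:
  assumes "i < length cs" "j < length cs" "j \<noteq> i" "j \<noteq> nxt i"
  shows "0 < side i (corner j)"
  using corners_convex assms
  unfolding side_def orientation_def convex_polygon_corners_def corner_def nxt_def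
  by (auto simp: mult_less_0_iff split: if_splits)

lemma side_edge_corners [simp]: "side i (corner i) = 0" "side i (corner (nxt i)) = 0"
  by (simp_all add: side_def)

lemma side_corner_nonneg: "i < length cs \<Longrightarrow> j < length cs \<Longrightarrow> 0 \<le> side i (corner j)"
  using side_corner_pos[of i j] by (cases "j = i \<or> j = nxt i") auto

lemma side_convex_comb:
  "side i ((1 - t) *\<^sub>R a + t *\<^sub>R b) = (1 - t) * side i a + t * side i b"
  unfolding side_def cross3_convex_comb by (simp add: algebra_simps)

lemma harmonic_side: "harmonic (\<lambda>v. side i (f v))"
  unfolding side_def by (intro harmonic_linear[OF linear_times] harmonic_cross3 f_harmonic)

lemma corners_distinct:
  assumes "i < length cs"
  shows "corner i \<noteq> corner (nxt i)"
proof -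
  have "cs ! i \<noteq> cs ! nxt i" "cs ! i \<in> V" "cs ! nxt i \<in> V"
    using cycle_distinct cycle_in_V assms nxt_less[OF assms] nxt_neq[OF assms]
    by (auto simp: nth_eq_iff_index_eq)
  then show ?thesis
    using f_inj by (auto simp: corner_def dest: inj_onD)
qed

text \<open>By the minimum principle the whole drawing lies in the polygon spanned by the
  corners.\<close>

lemma drawing_in_polygon:
  assumes "z \<in> drawing" "i < length cs"
  shows "0 \<le> side i z"
proof -
  have "V \<noteq> {}" using cycle_in_V length_cs by auto
  then obtain c where c: "c \<in> set cs" "\<And>v. v \<in> V \<Longrightarrow> side i (f c) \<le> side i (f v)"
    using harmonic_min_on_boundary[OF f_harmonic f_inj loopfree edges_in_V _ harmonic_side]
    by metis
  obtain k where "k < length cs" "c = cs ! k"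
    using c(1) by (auto simp: in_set_conv_nth)
  then have "0 \<le> side i (f c)"
    using side_corner_nonneg[OF assms(2)] by (simp add: corner_def)
  with c(2) have vertices: "0 \<le> side i (f v)" if "v \<in> V" for v
    using that order_trans by blast
  show ?thesis
    using assms(1) unfolding straight_drawing_def
  proof (elim UnE imageE UN_E)
    fix e assume "e \<in> E" "z \<in> (case e of (u, v) \<Rightarrow> closed_segment (f u) (f v))"
    then obtain u v t where "(u, v) \<in> E" "0 \<le> t" "t \<le> 1" "z = (1 - t) *\<^sub>R f u + t *\<^sub>R f v"
      by (auto simp: in_segment)
    with edges_in_V vertices show ?thesis
      by (auto simp: side_convex_comb)
  qed (use vertices in auto)
qed

text \<open>Points of a bounded face lie strictly inside the polygon: from a point on or outside
  the line of a polygon edge, the ray pointing away from the polygon avoids the drawing.\<close>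

lemma bounded_face_in_polygon:
  assumes F: "F \<in> components (- drawing)" "bounded F" "z \<in> F" and i: "i < length cs"
  shows "0 < side i z"
proof (rule ccontr)
  assume "\<not> 0 < side i z"
  define a where "a = corner i"
  define b where "b = corner (nxt i)"
  define d where "d = - (of_real orientation * \<i> * (b - a))"
  have "a \<noteq> b" using corners_distinct[OF i] by (simp add: a_def b_def)
  then have "d \<noteq> 0" using orientation_square by (auto simp: d_def)
  define N where "N = (Re b - Re a)\<^sup>2 + (Im b - Im a)\<^sup>2"
  have "0 < N"
    using \<open>a \<noteq> b\<close> by (auto simp: N_def complex_eq_iff sum_power2_gt_zero_iff)
  have ray: "side i (z + t *\<^sub>R d) = side i z - t * (orientation * orientation) * N" for t
    by (simp add: side_def a_def[symmetric] b_def[symmetric] d_def N_def cross3_coord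
        power2_eq_square scaleR_conv_of_real algebra_simps)
  then have "side i (z + t *\<^sub>R d) < 0" if "0 < t" for t
  proof -
    have "0 < t * N" using that \<open>0 < N\<close> by simp
    then show ?thesis
      using \<open>\<not> 0 < side i z\<close> by (simp add: ray orientation_square)
  qed
  then have "z + t *\<^sub>R d \<notin> drawing" if "0 < t" for t
    using that drawing_in_polygon[OF _ i] by force
  with bounded_component_no_ray[OF F \<open>d \<noteq> 0\<close>] show False by blast
qed

lemma collinear_drawing_reaches_corner:
  assumes xy: "x \<notin> drawing" "y \<notin> drawing" and w: "w \<in> open_segment x y" "w \<in> drawing"
    and no_crossing: "\<And>a b. (a, b) \<in> E \<Longrightarrow> closed_segment (f a) (f b) \<inter> open_segment x y \<noteq> {} \<Longrightarrow>
        0 \<le> cross3 x y (f a) * cross3 x y (f b)"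
    and no_branching: "\<And>v u. v \<in> V - set cs \<Longrightarrow> f v \<in> open_segment x y \<Longrightarrow> (v, u) \<in> E \<Longrightarrow>
        cross3 x y (f u) = 0"
  obtains c where "c \<in> set cs" "f c \<in> open_segment x y"
proof -
  define W where "W = {v \<in> V. f v \<in> open_segment x y}"
  have on_line: "f u \<in> open_segment x y"
    if "p \<in> open_segment x y" "cross3 x y (f u) = 0" "closed_segment p (f u) \<subseteq> drawing" for p u
    using collinear_in_open_segment[OF that(1,2)] that(3) xy by blast
  have "neighbour_closed W"
    unfolding neighbour_closed_def
  proof (intro conjI ballI allI impI)
    fix v u assume v: "v \<in> W - set cs" and vu: "(v, u) \<in> E"
    then have "f u \<in> open_segment x y"
      using on_line no_branching edge_in_straight_drawing[OF vu] by (auto simp: W_def)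
    then show "u \<in> W" using vu edges_in_V by (auto simp: W_def)
  qed (auto simp: W_def)
  moreover have "W \<noteq> {}"
    using w(2) unfolding straight_drawing_def
  proof (elim UnE imageE UN_E)
    fix e assume "e \<in> E" "w \<in> (case e of (a, b) \<Rightarrow> closed_segment (f a) (f b))"
    then obtain a b where ab: "(a, b) \<in> E" "w \<in> closed_segment (f a) (f b)" by auto
    then have "a \<in> V" "b \<in> V" using edges_in_V by auto
    have "0 \<le> cross3 x y (f a) * cross3 x y (f b)"
      using no_crossing[OF ab(1)] ab(2) w(1) by blast
    moreover have "cross3 x y w = 0"
      using w(1) by (intro cross3_segment) (auto simp: open_segment_def)
    moreover have "closed_segment w (f a) \<subseteq> drawing"
      using closed_segment_subset[OF ab(2) ends_in_segment(1) convex_closed_segment]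
        edge_in_straight_drawing[OF ab(1)] by blast
    ultimately have "f a \<in> open_segment x y \<or> w = f b"
      using on_line[OF w(1)] segment_touching_line[OF _ _ ab(2)] by blast
    then show "W \<noteq> {}"
      using w(1) \<open>a \<in> V\<close> \<open>b \<in> V\<close> by (auto simp: W_def)
  qed (use w(1) in \<open>auto simp: W_def\<close>)
  ultimately have "W \<inter> set cs \<noteq> {}"
    by (rule neighbour_closed_meets_boundary[OF f_harmonic f_inj loopfree])
  then show ?thesis using that by (auto simp: W_def)
qed

lemma segment_through_drawing_cases:
  assumes xy: "x \<notin> drawing" "y \<notin> drawing" and w: "w \<in> open_segment x y" "w \<in> drawing"
  obtains (crossing) a b where "(a, b) \<in> E" "closed_segment (f a) (f b) \<inter> open_segment x y \<noteq> {}"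
      "cross3 x y (f a) * cross3 x y (f b) < 0"
    | (branching) v u where "v \<in> V - set cs" "f v \<in> open_segment x y" "(v, u) \<in> E"
      "cross3 x y (f u) \<noteq> 0"
    | (corner) c where "c \<in> set cs" "f c \<in> open_segment x y"
proof (cases "\<exists>a b. (a, b) \<in> E \<and> closed_segment (f a) (f b) \<inter> open_segment x y \<noteq> {} \<and>
    cross3 x y (f a) * cross3 x y (f b) < 0")
  case True
  then show ?thesis using crossing by blast
next
  case no_crossing: False
  show ?thesis
  proof (cases "\<exists>v u. v \<in> V - set cs \<and> f v \<in> open_segment x y \<and> (v, u) \<in> E \<and>
      cross3 x y (f u) \<noteq> 0")
    case True
    then show ?thesis using branching by blast
  next
    case False
    obtain c where "c \<in> set cs" "f c \<in> open_segment x y"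
      by (rule collinear_drawing_reaches_corner[OF xy w])
        (use no_crossing False in \<open>auto simp: not_less\<close>)
    then show ?thesis by (rule corner)
  qed
qed

text \<open>A transversal edge or a vertex with neighbours on both sides (harmonicity) persists; a corner
  on the segment is impossible, as it would lie strictly inside the polygon.\<close>

lemma drawing_blocks_nearby:
  assumes xy: "x \<notin> drawing" "y \<notin> drawing" and w: "w \<in> open_segment x y" "w \<in> drawing"
    and inside: "\<And>i. i < length cs \<Longrightarrow> 0 < side i x" "\<And>i. i < length cs \<Longrightarrow> 0 < side i y"
  shows "\<exists>T. open T \<and> y \<in> T \<and> (\<forall>y'\<in>T. closed_segment x y' \<inter> drawing \<noteq> {})"
  using xy w
proof (cases rule: segment_through_drawing_cases)
  case (crossing a b)
  then obtain p where p: "p \<in> open_segment x y" "p \<in> closed_segment (f a) (f b)" by blast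
  with crossing_segment_persists[OF p crossing(3)] edge_in_straight_drawing[OF crossing(1)]
  show ?thesis by fast
next
  case (branching v u)
  have g: "harmonic (\<lambda>u. cross3 x y (f u))"
    by (rule harmonic_cross3[OF f_harmonic])
  have "cross3 x y (f v) = 0"
    using branching(2) by (intro cross3_segment) (auto simp: open_segment_def)
  moreover have "u \<in> V" using branching(3) edges_in_V by auto
  ultimately obtain w1 w2 where w:
    "(v, w1) \<in> E" "0 < cross3 x y (f w1)" "(v, w2) \<in> E" "cross3 x y (f w2) < 0"
    by (rule harmonic_neighbours_both_sides[OF g branching(1) _ branching(3) _ branching(4)])
  have "closed_segment (f v) (f w1) \<union> closed_segment (f v) (f w2) \<subseteq> drawing"
    using edge_in_straight_drawing[OF w(1)] edge_in_straight_drawing[OF w(3)] by blast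
  moreover obtain T where "open T" "y \<in> T"
    "\<forall>y'\<in>T. closed_segment x y' \<inter> (closed_segment (f v) (f w1) \<union> closed_segment (f v) (f w2)) \<noteq> {}"
    using crossing_wedge_persists[OF branching(2) w(2) w(4)] by blast
  ultimately show ?thesis
    by (intro exI[of _ T]) auto
next
  case (corner c)
  then obtain k where k: "k < length cs" "f c = corner k"
    by (auto simp: in_set_conv_nth corner_def)
  then obtain t where "0 < t" "t < 1" "corner k = (1 - t) *\<^sub>R x + t *\<^sub>R y"
    using corner(2) by (auto simp: in_segment)
  then have "0 < side k (corner k)"
    using inside[OF k(1)] by (simp add: side_convex_comb add_pos_pos)
  then show ?thesis by simp
qed

theorem bounded_face_convex:
  assumes F: "F \<in> components (- drawing)" "bounded F"
  shows "convex F"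
proof -
  have closed: "closed drawing"
    using finite_V edges_in_V finite_subset[OF edges_in_V]
    by (intro straight_drawing_closed) auto
  have F_off: "F \<subseteq> - drawing"
    using F(1) by (rule in_components_subset)
  show ?thesis
  proof (rule convex_if_invisibility_open)
    show "open F"
      using closed by (intro open_components[OF _ F(1)]) (simp add: open_Compl)
    show "connected F"
      using F(1) by (rule in_components_connected)
next
    fix x y assume "x \<in> F" "y \<in> F" and invisible: "\<not> closed_segment x y \<subseteq> F"
    have "\<exists>w. w \<in> open_segment x y \<and> w \<in> drawing"
    proof (rule ccontr)
      assume "\<nexists>w. w \<in> open_segment x y \<and> w \<in> drawing"
      then have "closed_segment x y \<subseteq> - drawing"
        using \<open>x \<in> F\<close> \<open>y \<in> F\<close> F_off by (auto simp: open_segment_def)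
      moreover have "F \<inter> closed_segment x y \<noteq> {}"
        using \<open>x \<in> F\<close> by auto
      ultimately have "closed_segment x y \<subseteq> F"
        by (intro components_maximal[OF F(1) connected_segment])
      with invisible show False ..
    qed
    then obtain w where "w \<in> open_segment x y" "w \<in> drawing" by blast
    then obtain T where "open T" "y \<in> T" "\<forall>y'\<in>T. closed_segment x y' \<inter> drawing \<noteq> {}"
      using \<open>x \<in> F\<close> \<open>y \<in> F\<close> F_off bounded_face_in_polygon[OF F]
        drawing_blocks_nearby[of x y w] by auto
    moreover have "\<not> S \<subseteq> F" if "S \<inter> drawing \<noteq> {}" for S
      using that F_off by auto
    ultimately show "\<exists>T. open T \<and> y \<in> T \<and> (\<forall>y'\<in>T. \<not> closed_segment x y' \<subseteq> F)"
      by auto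
  qed
qed

end

theorem lemma1p3:
  fixes V :: "'a set" and E :: "('a \<times> 'a) set"
    and p :: "'a \<Rightarrow> complex" and \<gamma> :: "'a \<Rightarrow> 'a \<Rightarrow> real \<Rightarrow> complex"
    and cs :: "'a list" and f :: "'a \<Rightarrow> complex"
  assumes "simple_graph V E"
    and "plane_embedding V E p \<gamma>"
    and "external_boundary_cycle V E p \<gamma> cs"
    and "convex_combination_map V E cs f"
    and "straight_line_embedding V E f"
    and "F \<in> straight_faces V E f"
    and "bounded F"
  shows "convex F"
proof -
  have graph: "finite V" "E \<subseteq> V \<times> V" "\<And>u. (u, u) \<notin> E"
    using assms(1) by (auto simp: simple_graph_def)
  have cycle: "distinct cs" "set cs \<subseteq> V"
    using assms(3) by (auto simp: external_boundary_cycle_def graph_cycle_def)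
  obtain lam where corners: "convex_polygon_corners (\<lambda>i. f (cs ! i)) (length cs)"
    and weights: "\<forall>u \<in> V - set cs. (\<forall>v\<in>V. 0 \<le> lam u v \<and> (0 < lam u v \<longleftrightarrow> (u, v) \<in> E)) \<and>
        (\<Sum>v\<in>V. lam u v) = 1 \<and> f u = (\<Sum>v\<in>V. lam u v *\<^sub>R f v)"
    using assms(4) by (auto simp: convex_combination_map_def)
  have "inj_on f V"
    using assms(5) by (simp add: straight_line_embedding_def)
  interpret convex_weights V E "set cs" lam
    using graph(1) weights by unfold_locales auto
  interpret convex_combination_drawing V E cs lam f
    using graph cycle corners weights \<open>inj_on f V\<close>
    by unfold_locales (auto simp: harmonic_def)
  show ?thesis
    using bounded_face_convex assms(6,7) by (simp add: straight_faces_def)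
qed

end
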